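(* Let $\Gamma$ be a non-elementary hyperbolic group with finite generating set $S$, and let $(\gamma_n)$ be a sequence of distinct elements of $\Gamma$. There is $h\in\Gamma$ such that the sequence $(l_S([\gamma_n,h]))_n$ is unbounded.
   Context: $[g,h]=ghg^{-1}h^{-1}$; $l_S$ is the translation length on the Cayley graph $C_S(\Gamma)$. Non-elementary: contains a free subgroup of rank 2. *)

theory Defs
  imports "HOL-Algebra.Algebra"
begin

definition sym_gens :: "('a, 'b) monoid_scheme \<Rightarrow> 'a set \<Rightarrow> 'a set" where
  "sym_gens G S = S \<union> (\<lambda>s. inv\<^bsub>G\<^esub> s) ` S"

definition word_eval :: "('a, 'b) monoid_scheme \<Rightarrow> 'a list \<Rightarrow> 'a" where
  "word_eval G ws = foldr (\<lambda>x y. x \<otimes>\<^bsub>G\<^esub> y) ws \<one>\<^bsub>G\<^esub>"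

definition word_length :: "('a, 'b) monoid_scheme \<Rightarrow> 'a set \<Rightarrow> 'a \<Rightarrow> nat" where
  "word_length G S g =
     (LEAST n. \<exists>ws. length ws = n \<and> set ws \<subseteq> sym_gens G S \<and> word_eval G ws = g)"

text \<open>Word metric d_S(x,y) = |x^{-1} y|_S (graph metric of the Cayley graph on vertices).\<close>
definition word_dist :: "('a, 'b) monoid_scheme \<Rightarrow> 'a set \<Rightarrow> 'a \<Rightarrow> 'a \<Rightarrow> nat" where
  "word_dist G S x y = word_length G S (inv\<^bsub>G\<^esub> x \<otimes>\<^bsub>G\<^esub> y)"

definition gromov_product :: "('a, 'b) monoid_scheme \<Rightarrow> 'a set \<Rightarrow> 'a \<Rightarrow> 'a \<Rightarrow> 'a \<Rightarrow> real" where
  "gromov_product G S w x y =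
     (real (word_dist G S w x) + real (word_dist G S w y) - real (word_dist G S x y)) / 2"

text \<open>Gromov hyperbolicity of the Cayley graph (four-point condition on vertices).\<close>
definition hyperbolic_group :: "('a, 'b) monoid_scheme \<Rightarrow> 'a set \<Rightarrow> bool" where
  "hyperbolic_group G S \<longleftrightarrow> (\<exists>\<delta>::real. \<delta> \<ge> 0 \<and>
     (\<forall>w\<in>carrier G. \<forall>x\<in>carrier G. \<forall>y\<in>carrier G. \<forall>z\<in>carrier G.
        gromov_product G S w x y \<ge> min (gromov_product G S w x z) (gromov_product G S w y z) - \<delta>))"

definition transl_length :: "('a, 'b) monoid_scheme \<Rightarrow> 'a set \<Rightarrow> 'a \<Rightarrow> nat" where
  "transl_length G S g = (LEAST n. \<exists>x\<in>carrier G. word_dist G S x (g \<otimes>\<^bsub>G\<^esub> x) = n)"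

definition commutator :: "('a, 'b) monoid_scheme \<Rightarrow> 'a \<Rightarrow> 'a \<Rightarrow> 'a" where
  "commutator G g h = g \<otimes>\<^bsub>G\<^esub> h \<otimes>\<^bsub>G\<^esub> inv\<^bsub>G\<^esub> g \<otimes>\<^bsub>G\<^esub> inv\<^bsub>G\<^esub> h"

text \<open>Letters: (False,e) is a^{\<plusminus>1}, (True,e) is b^{\<plusminus>1}; e = True means inverse.\<close>
fun letter_eval :: "('a, 'b) monoid_scheme \<Rightarrow> 'a \<Rightarrow> 'a \<Rightarrow> bool \<times> bool \<Rightarrow> 'a" where
  "letter_eval G a b (gen, e) = (let x = (if gen then b else a) in if e then inv\<^bsub>G\<^esub> x else x)"

fun reduced_word :: "(bool \<times> bool) list \<Rightarrow> bool" where
  "reduced_word (l1 # l2 # ls) = (\<not> (fst l1 = fst l2 \<and> snd l1 \<noteq> snd l2) \<and> reduced_word (l2 # ls))"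
| "reduced_word _ = True"

definition free_pair :: "('a, 'b) monoid_scheme \<Rightarrow> 'a \<Rightarrow> 'a \<Rightarrow> bool" where
  "free_pair G a b \<longleftrightarrow> a \<in> carrier G \<and> b \<in> carrier G \<and>
     (\<forall>w. w \<noteq> [] \<and> reduced_word w \<longrightarrow> word_eval G (map (letter_eval G a b) w) \<noteq> \<one>\<^bsub>G\<^esub>)"

definition non_elementary :: "('a, 'b) monoid_scheme \<Rightarrow> bool" where
  "non_elementary G \<longleftrightarrow> (\<exists>a b. free_pair G a b)"

end

theory Submission
  imports Defs
begin

(*
  Call h transverse to g (with constant K) if the Gromov products at 1 of h and h^-1 with g
  and g^-1 are all at most K. Then the path 1, g, gh, ghg^-1, [g,h], [g,h]g, ... has corners
  at most K, and if its segments are longer than 2K + 2 delta, hyperbolicity makes it a local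
  geodesic that escapes linearly, so l([g,h]) >= 2|g| + 2|h| - 8(K + delta) - 1.
  By the four-point condition, the elements of length at most R that are not transverse to g
  with constant t lie in four balls of radius about R - t, centred on the geodesics from 1 to
  g and to g^-1. A free subgroup makes the growth of balls exponential, so for suitable fixed
  t and R an annulus of outer radius R is larger than these four balls: every long g has a
  transverse partner h with |h| <= R, hence l([g,h]) >= 2|g| - C for a constant C.
  If every l([gamma_n, h]) were bounded in n, the finitely many h with |h| <= R would bound
  |gamma_n|; but infinitely many distinct elements cannot lie in a finite ball.
*)

section \<open>Word metric\<close>

lemma word_eval_Nil [simp]: "word_eval G [] = \<one>\<^bsub>G\<^esub>"
  by (simp add: word_eval_def)

lemma word_eval_Cons [simp]: "word_eval G (x # xs) = x \<otimes>\<^bsub>G\<^esub> word_eval G xs"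
  by (simp add: word_eval_def)

context group
begin

lemma word_eval_closed: "set ws \<subseteq> carrier G \<Longrightarrow> word_eval G ws \<in> carrier G"
  by (induction ws) auto

lemma word_eval_append:
  "set xs \<subseteq> carrier G \<Longrightarrow> set ys \<subseteq> carrier G \<Longrightarrow>
   word_eval G (xs @ ys) = word_eval G xs \<otimes> word_eval G ys"
  by (induction xs) (auto simp: word_eval_closed m_assoc)

lemma word_eval_rev_inv:
  "set ws \<subseteq> carrier G \<Longrightarrow> word_eval G (map (\<lambda>x. inv x) (rev ws)) = inv (word_eval G ws)"
proof (induction ws)
  case (Cons x xs)
  then have "word_eval G (map (\<lambda>x. inv x) (rev (x # xs)))
      = word_eval G (map (\<lambda>x. inv x) (rev xs)) \<otimes> inv x"
    using Cons.prems word_eval_append[of "map (\<lambda>x. inv x) (rev xs)" "[inv x]"] by auto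
  then show ?case
    using Cons word_eval_closed[of xs] by (simp add: inv_mult_group)
qed simp

end

locale fg_group = group G for G :: "('a, 'b) monoid_scheme" (structure) +
  fixes S :: "'a set"
  assumes finite_gens: "finite S" and gens_closed: "S \<subseteq> carrier G"
    and generate_gens: "generate G S = carrier G"
begin

abbreviation "len \<equiv> word_length G S"
abbreviation "dst \<equiv> word_dist G S"
abbreviation "gp \<equiv> gromov_product G S"
abbreviation "ball_card r \<equiv> card {g \<in> carrier G. len g \<le> r}"

lemma sym_gens_closed: "sym_gens G S \<subseteq> carrier G"
  using gens_closed by (auto simp: sym_gens_def)

lemma inv_sym_gens: "x \<in> sym_gens G S \<Longrightarrow> inv x \<in> sym_gens G S"
  using gens_closed by (auto simp: sym_gens_def)

lemma exists_word: "g \<in> carrier G \<Longrightarrow> \<exists>ws. set ws \<subseteq> sym_gens G S \<and> word_eval G ws = g"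
  unfolding generate_gens[symmetric]
proof (induction rule: generate.induct)
  case one
  show ?case by (intro exI[of _ "[]"]) simp
next
  case (incl h)
  then show ?case using gens_closed by (intro exI[of _ "[h]"]) (auto simp: sym_gens_def)
next
  case (inv h)
  then show ?case using gens_closed by (intro exI[of _ "[inv h]"]) (auto simp: sym_gens_def)
next
  case (eng h1 h2)
  then obtain w1 w2 where "set w1 \<subseteq> sym_gens G S" "word_eval G w1 = h1"
    and "set w2 \<subseteq> sym_gens G S" "word_eval G w2 = h2"
    by blast
  then show ?case
    using sym_gens_closed by (intro exI[of _ "w1 @ w2"]) (auto simp: word_eval_append)
qed

lemma word_length_attained:
  assumes "g \<in> carrier G"
  obtains ws where "length ws = len g" "set ws \<subseteq> sym_gens G S" "word_eval G ws = g"
proof -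
  have "\<exists>n ws. length ws = n \<and> set ws \<subseteq> sym_gens G S \<and> word_eval G ws = g"
    using exists_word[OF assms] by blast
  then have "\<exists>ws. length ws = len g \<and> set ws \<subseteq> sym_gens G S \<and> word_eval G ws = g"
    unfolding word_length_def by (rule LeastI_ex)
  then show ?thesis
    using that by blast
qed

lemma word_length_le: "set ws \<subseteq> sym_gens G S \<Longrightarrow> len (word_eval G ws) \<le> length ws"
  unfolding word_length_def by (rule Least_le) blast

lemma word_length_one [simp]: "len \<one> = 0"
  using word_length_le[of "[]"] by simp

lemma word_length_mult:
  assumes "x \<in> carrier G" "y \<in> carrier G"
  shows "len (x \<otimes> y) \<le> len x + len y"
proof -
  obtain u where u: "length u = len x" "set u \<subseteq> sym_gens G S" "word_eval G u = x"
    using word_length_attained[OF assms(1)] .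
  obtain v where v: "length v = len y" "set v \<subseteq> sym_gens G S" "word_eval G v = y"
    using word_length_attained[OF assms(2)] .
  have "x \<otimes> y = word_eval G (u @ v)"
    using u v sym_gens_closed by (simp add: word_eval_append)
  then show ?thesis
    using word_length_le[of "u @ v"] u v by simp
qed

lemma word_length_inv_le:
  assumes "x \<in> carrier G"
  shows "len (inv x) \<le> len x"
proof -
  obtain u where u: "length u = len x" "set u \<subseteq> sym_gens G S" "word_eval G u = x"
    using word_length_attained[OF assms] .
  have "inv x = word_eval G (map (\<lambda>x. inv x) (rev u))"
    using u sym_gens_closed by (simp add: word_eval_rev_inv)
  then show ?thesis
    using word_length_le[of "map (\<lambda>x. inv x) (rev u)"] u inv_sym_gens by auto
qed

lemma word_length_inv [simp]: "x \<in> carrier G \<Longrightarrow> len (inv x) = len x"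
  using word_length_inv_le[of x] word_length_inv_le[of "inv x"] by simp

lemma exists_point_on_geodesic:
  assumes g: "g \<in> carrier G" and k: "k \<le> len g"
  obtains p where "p \<in> carrier G" "len p = k" "len (inv p \<otimes> g) = len g - k"
proof -
  obtain w where w: "length w = len g" "set w \<subseteq> sym_gens G S" "word_eval G w = g"
    using word_length_attained[OF g] .
  define p where "p = word_eval G (take k w)"
  define q where "q = word_eval G (drop k w)"
  have words: "set (take k w) \<subseteq> sym_gens G S" "set (drop k w) \<subseteq> sym_gens G S"
    using w(2) set_take_subset set_drop_subset by fastforce+
  then have pq: "p \<in> carrier G" "q \<in> carrier G"
    using sym_gens_closed word_eval_closed unfolding p_def q_def by blast+
  have g_eq: "g = p \<otimes> q"
    unfolding p_def q_def using w words sym_gens_closed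
    by (metis append_take_drop_id word_eval_append order_trans)
  then have "inv p \<otimes> g = q"
    using pq by (simp add: m_assoc[symmetric])
  moreover have "len p \<le> k" "len q \<le> len g - k"
    using word_length_le[OF words(1)] word_length_le[OF words(2)] w k
    unfolding p_def q_def by simp_all
  moreover have "len g \<le> len p + len q"
    using word_length_mult[OF pq] g_eq by simp
  ultimately show ?thesis
    using that pq k by simp
qed

lemma finite_ball: "finite {g \<in> carrier G. len g \<le> r}"
proof (rule finite_subset)
  show "{g \<in> carrier G. len g \<le> r} \<subseteq> word_eval G ` {ws. set ws \<subseteq> sym_gens G S \<and> length ws \<le> r}"
  proof
    fix g
    assume "g \<in> {g \<in> carrier G. len g \<le> r}"
    then obtain ws where "length ws = len g" "set ws \<subseteq> sym_gens G S" "word_eval G ws = g" "len g \<le> r"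
      using word_length_attained by blast
    then show "g \<in> word_eval G ` {ws. set ws \<subseteq> sym_gens G S \<and> length ws \<le> r}"
      by force
  qed
  have "finite (sym_gens G S)"
    using finite_gens by (simp add: sym_gens_def)
  then show "finite (word_eval G ` {ws. set ws \<subseteq> sym_gens G S \<and> length ws \<le> r})"
    by (intro finite_imageI finite_lists_length_le)
qed

lemma ball_card_mono: "r \<le> r' \<Longrightarrow> ball_card r \<le> ball_card r'"
  by (rule card_mono[OF finite_ball]) auto

lemma word_dist_eq: "dst x y = len (inv x \<otimes> y)"
  by (simp add: word_dist_def)

lemma word_dist_one [simp]: "x \<in> carrier G \<Longrightarrow> dst \<one> x = len x"
  by (simp add: word_dist_def)

lemma word_dist_self [simp]: "x \<in> carrier G \<Longrightarrow> dst x x = 0"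
  by (simp add: word_dist_def)

lemma word_dist_commute: "x \<in> carrier G \<Longrightarrow> y \<in> carrier G \<Longrightarrow> dst x y = dst y x"
  using word_length_inv[of "inv x \<otimes> y"] by (simp add: word_dist_def inv_mult_group)

lemma word_dist_triangle:
  assumes "x \<in> carrier G" "y \<in> carrier G" "z \<in> carrier G"
  shows "dst x z \<le> dst x y + dst y z"
proof -
  have "y \<otimes> (inv y \<otimes> z) = z"
    using assms by (simp add: m_assoc[symmetric])
  then have "inv x \<otimes> z = (inv x \<otimes> y) \<otimes> (inv y \<otimes> z)"
    using assms by (simp add: m_assoc)
  then show ?thesis
    using word_length_mult[of "inv x \<otimes> y" "inv y \<otimes> z"] assms by (simp add: word_dist_def)
qed

lemma word_dist_mult_left:
  assumes "w \<in> carrier G" "x \<in> carrier G" "y \<in> carrier G"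
  shows "dst (w \<otimes> x) (w \<otimes> y) = dst x y"
proof -
  have "inv (w \<otimes> x) \<otimes> (w \<otimes> y) = inv x \<otimes> y"
    using assms by (simp add: inv_mult_group m_assoc[symmetric]) (simp add: m_assoc)
  then show ?thesis by (simp add: word_dist_def)
qed

lemma gromov_product_mult_left:
  "w \<in> carrier G \<Longrightarrow> a \<in> carrier G \<Longrightarrow> x \<in> carrier G \<Longrightarrow> y \<in> carrier G \<Longrightarrow>
   gp (w \<otimes> a) (w \<otimes> x) (w \<otimes> y) = gp a x y"
  by (simp add: gromov_product_def word_dist_mult_left)

lemma gromov_product_commute:
  "x \<in> carrier G \<Longrightarrow> y \<in> carrier G \<Longrightarrow> gp w x y = gp w y x"
  by (simp add: gromov_product_def word_dist_commute add.commute)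

lemma gromov_product_one:
  "x \<in> carrier G \<Longrightarrow> y \<in> carrier G \<Longrightarrow> gp \<one> x y = (real (len x) + real (len y) - real (dst x y)) / 2"
  by (simp add: gromov_product_def)

end

section \<open>Periodic products and translation length\<close>

primrec partial_prod :: "('a, 'b) monoid_scheme \<Rightarrow> (nat \<Rightarrow> 'a) \<Rightarrow> nat \<Rightarrow> 'a" where
  "partial_prod G c 0 = \<one>\<^bsub>G\<^esub>"
| "partial_prod G c (Suc i) = partial_prod G c i \<otimes>\<^bsub>G\<^esub> c i"

lemma periodic_add_mult:
  fixes f :: "nat \<Rightarrow> 'a" and n :: nat
  assumes "\<And>i. f (i + n) = f i"
  shows "f (i + m * n) = f i"
proof (induction m)
  case (Suc m)
  have "i + Suc m * n = (i + m * n) + n"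
    by simp
  then show ?case
    using Suc assms by metis
qed simp

lemma sum_lessThan_periodic:
  fixes f :: "nat \<Rightarrow> 'a :: comm_semiring_1"
  assumes "\<And>i. f (i + n) = f i"
  shows "(\<Sum>i<k * n. f i) = of_nat k * (\<Sum>i<n. f i)"
proof -
  have "(\<Sum>i\<in>{m * n..<m * n + n}. f i) = (\<Sum>i<n. f i)" for m
    using sum.shift_bounds_nat_ivl[of f 0 "m * n" n] periodic_add_mult[of f n, OF assms]
    by (simp add: add.commute atLeast0LessThan)
  then show ?thesis
    using sum.nat_group[of f n k] by simp
qed

context group
begin

lemma partial_prod_closed: "(\<And>i. c i \<in> carrier G) \<Longrightarrow> partial_prod G c i \<in> carrier G"
  by (induction i) auto

lemma partial_prod_add:
  assumes "\<And>i. c i \<in> carrier G"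
  shows "partial_prod G c (m + i) = partial_prod G c m \<otimes> partial_prod G (\<lambda>j. c (m + j)) i"
  using assms by (induction i) (simp_all add: partial_prod_closed m_assoc)

lemma partial_prod_periodic:
  assumes "\<And>i. c i \<in> carrier G" and "\<And>i. c (i + n) = c i"
  shows "partial_prod G c (k * n) = partial_prod G c n [^] k"
proof (induction k)
  case (Suc k)
  have "partial_prod G (\<lambda>j. c (k * n + j)) n = partial_prod G c n"
    using periodic_add_mult[of c n, OF assms(2)] by (simp add: add.commute)
  then show ?case
    using Suc partial_prod_add[of c "k * n" n] assms(1)
    by (simp add: add.commute partial_prod_closed nat_pow_mult[symmetric] nat_pow_Suc)
qed simp

end

definition commutator_letter :: "('a, 'b) monoid_scheme \<Rightarrow> 'a \<Rightarrow> 'a \<Rightarrow> nat \<Rightarrow> 'a" where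
  "commutator_letter G g h i = [g, h, inv\<^bsub>G\<^esub> g, inv\<^bsub>G\<^esub> h] ! (i mod 4)"

lemma commutator_letter_cases: "commutator_letter G g h i \<in> {g, h, inv\<^bsub>G\<^esub> g, inv\<^bsub>G\<^esub> h}"
proof -
  have "commutator_letter G g h i \<in> set [g, h, inv\<^bsub>G\<^esub> g, inv\<^bsub>G\<^esub> h]"
    unfolding commutator_letter_def by (rule nth_mem) simp
  then show ?thesis
    by simp
qed

lemma commutator_letter_periodic: "commutator_letter G g h (i + 4) = commutator_letter G g h i"
  by (simp add: commutator_letter_def)

lemma commutator_letter_0123:
  "commutator_letter G g h 0 = g" "commutator_letter G g h (Suc 0) = h"
  "commutator_letter G g h (Suc (Suc 0)) = inv\<^bsub>G\<^esub> g"
  "commutator_letter G g h (Suc (Suc (Suc 0))) = inv\<^bsub>G\<^esub> h"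
  by (simp_all add: commutator_letter_def)

lemma (in group) partial_prod_commutator_letter:
  "g \<in> carrier G \<Longrightarrow> h \<in> carrier G \<Longrightarrow> partial_prod G (commutator_letter G g h) 4 = commutator G g h"
  by (simp add: eval_nat_numeral commutator_letter_0123 commutator_def)

context fg_group
begin

lemma transl_length_attained:
  obtains y where "y \<in> carrier G" "dst y (f \<otimes> y) = transl_length G S f"
proof -
  have "\<exists>n. \<exists>x\<in>carrier G. dst x (f \<otimes> x) = n"
    by blast
  then have "\<exists>x\<in>carrier G. dst x (f \<otimes> x) = transl_length G S f"
    unfolding transl_length_def by (rule LeastI_ex)
  then show ?thesis
    using that by blast
qed

lemma word_dist_pow_le:
  assumes f: "f \<in> carrier G" and y: "y \<in> carrier G"
  shows "dst y (f [^] k \<otimes> y) \<le> k * dst y (f \<otimes> y)"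
proof (induction k)
  case (Suc k)
  have "dst y (f [^] Suc k \<otimes> y) \<le> dst y (f [^] k \<otimes> y) + dst (f [^] k \<otimes> y) (f [^] k \<otimes> (f \<otimes> y))"
    using f y word_dist_triangle by (simp add: m_assoc nat_pow_Suc2)
  also have "dst (f [^] k \<otimes> y) (f [^] k \<otimes> (f \<otimes> y)) = dst y (f \<otimes> y)"
    using f y by (simp add: word_dist_mult_left)
  finally show ?case
    using Suc by simp
qed (use y in simp)

lemma word_length_pow_le:
  assumes f: "f \<in> carrier G" and y: "y \<in> carrier G"
  shows "len (f [^] k) \<le> 2 * len y + k * dst y (f \<otimes> y)"
proof -
  have fk: "f [^] k \<in> carrier G"
    using f by simp
  have "len (f [^] k) \<le> dst \<one> y + dst y (f [^] k \<otimes> y) + dst (f [^] k \<otimes> y) (f [^] k)"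
    using word_dist_triangle[of \<one> y "f [^] k"] word_dist_triangle[of y "f [^] k \<otimes> y" "f [^] k"] y fk
    by simp
  also have "dst (f [^] k \<otimes> y) (f [^] k) = len y"
    using word_dist_mult_left[OF fk y one_closed] word_dist_commute[OF y one_closed] fk y by simp
  finally show ?thesis
    using word_dist_pow_le[OF f y, of k] y by simp
qed

lemma transl_length_ge_of_escape:
  fixes L :: real
  assumes f: "f \<in> carrier G" and escape: "\<And>k. real k * L \<le> real (len (f [^] k))"
  shows "L - 1 \<le> real (transl_length G S f)"
proof -
  obtain y where y: "y \<in> carrier G" "dst y (f \<otimes> y) = transl_length G S f"
    by (rule transl_length_attained)
  define k where "k = 2 * len y + 1"
  have "len (f [^] k) \<le> 2 * len y + k * transl_length G S f"
    using word_length_pow_le[OF f y(1), of k] y(2) by simp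
  then have "real k * L \<le> real (2 * len y + k * transl_length G S f)"
    by (intro order_trans[OF escape[of k]] of_nat_mono)
  also have "\<dots> < real k * (1 + real (transl_length G S f))"
    unfolding k_def by (simp add: algebra_simps)
  finally show ?thesis
    using mult_less_cancel_left_pos[of "real k"] unfolding k_def by simp
qed


lemma word_dist_partial_prod_Suc:
  assumes "\<And>i. c i \<in> carrier G"
  shows "dst (partial_prod G c i) (partial_prod G c (Suc i)) = len (c i)"
  using word_dist_mult_left[OF partial_prod_closed[OF assms] one_closed assms] assms
  by (simp add: partial_prod_closed)

lemma gromov_product_partial_prod_corner:
  assumes c: "\<And>i. c i \<in> carrier G"
  shows "gp (partial_prod G c (Suc i)) (partial_prod G c i) (partial_prod G c (Suc (Suc i)))
    = gp \<one> (inv (c i)) (c (Suc i))"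
proof -
  let ?x = "partial_prod G c (Suc i)"
  have "partial_prod G c i = ?x \<otimes> inv (c i)"
    using c by (simp add: partial_prod_closed m_assoc)
  then show ?thesis
    using gromov_product_mult_left[of ?x \<one> "inv (c i)" "c (Suc i)"] c by (simp add: partial_prod_closed)
qed

lemma gromov_product_commutator_corner:
  fixes K :: real
  assumes g: "g \<in> carrier G" and h: "h \<in> carrier G"
    and transverse: "\<forall>y\<in>{h, inv h}. \<forall>z\<in>{g, inv g}. gp \<one> y z \<le> K"
  shows "gp \<one> (inv (commutator_letter G g h i)) (commutator_letter G g h (Suc i)) \<le> K"
proof -
  have "i mod 4 < 4"
    by simp
  then consider "i mod 4 = 0" | "i mod 4 = 1" | "i mod 4 = 2" | "i mod 4 = 3"
    by linarith
  then show ?thesis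
  proof cases
    case 1
    then have "commutator_letter G g h i = g" "commutator_letter G g h (Suc i) = h"
      by (simp_all add: commutator_letter_def mod_Suc)
    then show ?thesis
      using transverse gromov_product_commute[of h "inv g"] g h by simp
  next
    case 2
    then have "commutator_letter G g h i = h" "commutator_letter G g h (Suc i) = inv g"
      by (simp_all add: commutator_letter_def mod_Suc)
    then show ?thesis
      using transverse by simp
  next
    case 3
    then have "commutator_letter G g h i = inv g" "commutator_letter G g h (Suc i) = inv h"
      by (simp_all add: commutator_letter_def mod_Suc)
    then show ?thesis
      using transverse gromov_product_commute[of g "inv h"] g h by simp
  next
    case 4
    then have "commutator_letter G g h i = inv h" "commutator_letter G g h (Suc i) = g"
      by (simp_all add: commutator_letter_def mod_Suc)
    then show ?thesis
      using transverse h by simp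
  qed
qed
end

section \<open>Local geodesics in hyperbolic groups\<close>

locale hyperbolic_fg_group = fg_group +
  fixes \<delta> :: real
  assumes delta_nonneg: "0 \<le> \<delta>"
    and four_point: "\<And>w x y z. w \<in> carrier G \<Longrightarrow> x \<in> carrier G \<Longrightarrow> y \<in> carrier G \<Longrightarrow> z \<in> carrier G \<Longrightarrow>
        min (gp w x z) (gp w y z) - \<delta> \<le> gp w x y"
begin

lemma local_geodesic_escape:
  fixes x :: "nat \<Rightarrow> 'a" and K :: real
  assumes x: "\<And>i. x i \<in> carrier G" and K: "0 \<le> K"
    and corner: "\<And>i. gp (x (Suc i)) (x i) (x (Suc (Suc i))) \<le> K"
    and long: "\<And>i. 2 * K + 2 * \<delta> < real (dst (x i) (x (Suc i)))"
  shows "gp (x m) (x 0) (x (Suc m)) \<le> K + \<delta> \<and>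
    (\<Sum>i<Suc m. real (dst (x i) (x (Suc i))) - 2 * K - 2 * \<delta>) \<le> real (dst (x 0) (x (Suc m)))"
  \<comment> \<open>the first conjunct is the induction invariant\<close>
proof (induction m)
  case 0
  show ?case
    using K delta_nonneg x[of 0] by (simp add: gromov_product_def)
next
  case (Suc m)
  define a b c z where "a = x m" and "b = x (Suc m)" and "c = x (Suc (Suc m))" and "z = x 0"
  have abcz: "a \<in> carrier G" "b \<in> carrier G" "c \<in> carrier G" "z \<in> carrier G"
    unfolding a_def b_def c_def z_def using x by auto
  note dists = word_dist_commute[OF abcz(1,2)] word_dist_commute[OF abcz(1,4)]
    word_dist_commute[OF abcz(2,4)] word_dist_commute[OF abcz(3,4)] word_dist_commute[OF abcz(2,3)]
  \<comment> \<open>\<open>(a|z)_b + (z|b)_a = d(a,b)\<close>, and the latter is small by induction\<close>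
  have "K + \<delta> < gp b a z"
    using Suc.IH long[of m] dists unfolding a_def[symmetric] b_def[symmetric] z_def[symmetric]
    by (simp add: gromov_product_def)
  then have "gp b c z \<le> K + \<delta>"
    using four_point[OF abcz(2,1,3,4)] corner[of m] unfolding a_def b_def c_def by linarith
  then have "gp b z c \<le> K + \<delta>"
    using gromov_product_commute abcz by simp
  then show ?case
    using Suc.IH dists unfolding a_def b_def c_def z_def by (simp add: gromov_product_def)
qed

lemma transl_length_ge_periodic:
  fixes c :: "nat \<Rightarrow> 'a" and K :: real
  assumes c: "\<And>i. c i \<in> carrier G" and periodic: "\<And>i. c (i + n) = c i" and n: "0 < n"
    and K: "0 \<le> K"
    and corner: "\<And>i. gp \<one> (inv (c i)) (c (Suc i)) \<le> K"
    and long: "\<And>i. 2 * K + 2 * \<delta> < real (len (c i))"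
  shows "(\<Sum>i<n. real (len (c i))) - 2 * real n * (K + \<delta>) - 1
    \<le> real (transl_length G S (partial_prod G c n))"
proof -
  define x where "x = partial_prod G c"
  have x: "x i \<in> carrier G" for i
    unfolding x_def using c by (rule partial_prod_closed)
  have segment: "dst (x i) (x (Suc i)) = len (c i)" for i
    unfolding x_def using c by (rule word_dist_partial_prod_Suc)
  have corner_x: "gp (x (Suc i)) (x i) (x (Suc (Suc i))) \<le> K" for i
    unfolding x_def gromov_product_partial_prod_corner[OF c] by (rule corner)
  define L where "L = (\<Sum>i<n. real (len (c i)) - 2 * K - 2 * \<delta>)"
  have "real k * L \<le> real (len (x n [^] k))" for k
  proof (cases k)
    case (Suc k')
    then obtain m where m: "k * n = Suc m"
      using n by (metis mult_eq_0_iff not0_implies_Suc not_gr_zero)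
    have "real k * L = (\<Sum>i<k * n. real (dst (x i) (x (Suc i))) - 2 * K - 2 * \<delta>)"
      unfolding L_def segment
      by (rule sym, rule sum_lessThan_periodic) (simp add: periodic)
    also have "\<dots> \<le> real (dst (x 0) (x (k * n)))"
      unfolding m using local_geodesic_escape[of x K m] x K corner_x long segment by simp
    also have "x (k * n) = x n [^] k"
      unfolding x_def using c periodic by (rule partial_prod_periodic)
    finally show ?thesis
      using x by (simp add: x_def)
  qed simp
  then have "L - 1 \<le> real (transl_length G S (x n))"
    using x by (intro transl_length_ge_of_escape)
  then show ?thesis
    unfolding L_def x_def by (simp add: sum_subtractf algebra_simps)
qed

lemma commutator_transl_length_ge:
  fixes K :: real
  assumes g: "g \<in> carrier G" and h: "h \<in> carrier G" and K: "0 \<le> K"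
    and transverse: "\<forall>y\<in>{h, inv h}. \<forall>z\<in>{g, inv g}. gp \<one> y z \<le> K"
    and long: "2 * K + 2 * \<delta> < real (len g)" "2 * K + 2 * \<delta> < real (len h)"
  shows "2 * real (len g) + 2 * real (len h) - 8 * (K + \<delta>) - 1
    \<le> real (transl_length G S (commutator G g h))"
proof -
  let ?c = "commutator_letter G g h"
  have "?c i \<in> carrier G" "2 * K + 2 * \<delta> < real (len (?c i))" for i
    using commutator_letter_cases[of G g h i] g h long by auto
  then have "(\<Sum>i<4. real (len (?c i))) - 2 * real (4::nat) * (K + \<delta>) - 1
      \<le> real (transl_length G S (partial_prod G ?c 4))"
    using K gromov_product_commutator_corner[OF g h transverse]
    by (intro transl_length_ge_periodic) (simp_all add: commutator_letter_periodic)
  moreover have "(\<Sum>i<4. real (len (?c i))) = 2 * real (len g) + 2 * real (len h)"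
    using g h by (simp add: eval_nat_numeral commutator_letter_0123)
  ultimately show ?thesis
    using partial_prod_commutator_letter[OF g h] by simp
qed

end

lemma (in fg_group) exists_hyperbolic_fg_group:
  assumes "hyperbolic_group G S"
  shows "\<exists>\<delta>. hyperbolic_fg_group G S \<delta>"
proof -
  obtain \<delta> where "0 \<le> \<delta>" and "\<forall>w\<in>carrier G. \<forall>x\<in>carrier G. \<forall>y\<in>carrier G. \<forall>z\<in>carrier G.
      min (gp w x z) (gp w y z) - \<delta> \<le> gp w x y"
    using assms unfolding hyperbolic_group_def by blast
  then have "hyperbolic_fg_group G S \<delta>"
    by (intro hyperbolic_fg_group.intro hyperbolic_fg_group_axioms.intro fg_group_axioms) auto
  then show ?thesis ..
qed

section \<open>Exponential growth from a free subgroup\<close>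

lemma reduced_word_const: "reduced_word (map (\<lambda>l. (l, e)) ls)"
proof (induction ls)
  case (Cons l ls)
  then show ?case
    by (cases ls) auto
qed simp

lemma reduced_word_inv_append_pos:
  assumes "last (x # xs) \<noteq> y"
  shows "reduced_word (map (\<lambda>l. (l, True)) (x # xs) @ map (\<lambda>l. (l, False)) (y # ys))"
  using assms
proof (induction xs arbitrary: x)
  case Nil
  then show ?case
    using reduced_word_const[of False "y # ys"] by simp
next
  case (Cons x' xs)
  then show ?case
    by simp
qed

definition pos_word :: "('a, 'b) monoid_scheme \<Rightarrow> 'a \<Rightarrow> 'a \<Rightarrow> bool list \<Rightarrow> 'a" where
  "pos_word G a b u = word_eval G (map (\<lambda>l. if l then b else a) u)"

context group
begin

lemma pos_word_Cons: "pos_word G a b (l # u) = (if l then b else a) \<otimes> pos_word G a b u"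
  by (simp add: pos_word_def)

lemma pos_word_closed: "a \<in> carrier G \<Longrightarrow> b \<in> carrier G \<Longrightarrow> pos_word G a b u \<in> carrier G"
  unfolding pos_word_def by (rule word_eval_closed) auto

lemma word_eval_inv_append_pos:
  assumes "a \<in> carrier G" "b \<in> carrier G"
  shows "word_eval G (map (letter_eval G a b) (map (\<lambda>l. (l, True)) (rev u) @ map (\<lambda>l. (l, False)) v))
     = inv (pos_word G a b u) \<otimes> pos_word G a b v"
proof -
  let ?u = "map (\<lambda>l. if l then b else a) u" and ?v = "map (\<lambda>l. if l then b else a) v"
  have inv_part: "map (letter_eval G a b) (map (\<lambda>l. (l, True)) (rev u)) = map (\<lambda>x. inv x) (rev ?u)"
    by (simp add: rev_map)
  have pos_part: "map (letter_eval G a b) (map (\<lambda>l. (l, False)) v) = ?v"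
    by simp
  have closed: "set ?u \<subseteq> carrier G" "set (map (\<lambda>x. inv x) (rev ?u)) \<subseteq> carrier G" "set ?v \<subseteq> carrier G"
    using assms by auto
  show ?thesis
    unfolding map_append inv_part pos_part word_eval_append[OF closed(2,3)] word_eval_rev_inv[OF closed(1)]
    by (simp add: pos_word_def)
qed

lemma pos_word_inj:
  assumes "free_pair G a b"
  shows "length u = length v \<Longrightarrow> pos_word G a b u = pos_word G a b v \<Longrightarrow> u = v"
proof (induction u arbitrary: v)
  case (Cons x u)
  have ab: "a \<in> carrier G" "b \<in> carrier G"
    using assms by (auto simp: free_pair_def)
  obtain y v' where v: "v = y # v'"
    using Cons.prems by (cases v) auto
  show ?case
  proof (cases "x = y")
    case True
    then have "pos_word G a b u = pos_word G a b v'"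
      using Cons.prems v ab pos_word_closed by (simp add: pos_word_Cons split: if_splits)
    then show ?thesis
      using Cons v True by simp
  next
    case False
    \<comment> \<open>the first letters differ, so the inverse of one word followed by the other is reduced\<close>
    define w where "w = map (\<lambda>l. (l, True)) (rev (x # u)) @ map (\<lambda>l. (l, False)) (y # v')"
    have "reduced_word w"
      unfolding w_def using False reduced_word_inv_append_pos[of "hd (rev (x # u))" "tl (rev (x # u))"]
      by (simp add: last_rev)
    moreover have "word_eval G (map (letter_eval G a b) w) = \<one>"
      unfolding w_def word_eval_inv_append_pos[OF ab] using Cons.prems v ab pos_word_closed by simp
    ultimately show ?thesis
      using assms unfolding free_pair_def w_def by auto
  qed
qed simp

end

context fg_group
begin

lemma word_length_pos_word:
  assumes "a \<in> carrier G" "b \<in> carrier G"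
  shows "len (pos_word G a b u) \<le> length u * max (len a) (len b)"
proof (induction u)
  case (Cons l u)
  have "len (pos_word G a b (l # u)) \<le> len (if l then b else a) + len (pos_word G a b u)"
    unfolding pos_word_Cons using assms pos_word_closed by (intro word_length_mult) auto
  then show ?case
    using Cons by (auto split: if_splits)
qed (simp add: pos_word_def)

lemma ball_card_ge_pow2:
  assumes "free_pair G a b"
  shows "2 ^ n \<le> ball_card (n * max (len a) (len b))"
proof -
  have ab: "a \<in> carrier G" "b \<in> carrier G"
    using assms by (auto simp: free_pair_def)
  let ?U = "{u :: bool list. set u \<subseteq> UNIV \<and> length u = n}"
  have "inj_on (pos_word G a b) ?U"
    using pos_word_inj[OF assms] by (auto simp: inj_on_def)
  then have "card ?U = card (pos_word G a b ` ?U)"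
    by (rule card_image[symmetric])
  also have "\<dots> \<le> ball_card (n * max (len a) (len b))"
    using word_length_pos_word[OF ab] pos_word_closed[OF ab] by (intro card_mono[OF finite_ball]) auto
  finally show ?thesis
    using card_lists_length_eq[of "UNIV :: bool set" n] by simp
qed

lemma ball_card_frequent_gap:
  assumes "free_pair G a b"
  obtains s where "\<And>R0. \<exists>R\<ge>R0. 5 * ball_card (R - s) < ball_card R"
proof -
  define s where "s = 4 * max (len a) (len b)"
  have "\<exists>R\<ge>R0. 5 * ball_card (R - s) < ball_card R" for R0
  proof (rule ccontr)
    assume "\<not> ?thesis"
    then have slow: "ball_card R \<le> 5 * ball_card (R - s)" if "R \<ge> R0" for R
      using that by (auto simp: not_less)
    have iterate: "ball_card (R0 + j * s) \<le> 5 ^ j * ball_card R0" for j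
    proof (induction j)
      case (Suc j)
      have "ball_card (R0 + Suc j * s) \<le> 5 * ball_card (R0 + j * s)"
        using slow[of "R0 + Suc j * s"] by simp
      then show ?case
        using Suc by simp
    qed simp
    \<comment> \<open>radius \<open>R\<^sub>0 + j s\<close> holds \<open>16\<^sup>j\<close> positive words but at most \<open>5\<^sup>j j\<close> elements for \<open>j = ball_card R\<^sub>0\<close>\<close>
    define j where "j = ball_card R0"
    have "(16::nat) ^ j = 2 ^ (4 * j)"
      by (simp add: power_mult)
    also have "\<dots> \<le> ball_card (4 * j * max (len a) (len b))"
      by (rule ball_card_ge_pow2[OF assms])
    also have "\<dots> \<le> ball_card (R0 + j * s)"
      unfolding s_def by (intro ball_card_mono) simp
    also have "\<dots> \<le> 5 ^ j * j"
      using iterate[of j] unfolding j_def by simp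
    also have "\<dots> < 5 ^ j * 2 ^ j"
      by simp
    also have "\<dots> \<le> 16 ^ j"
      by (simp add: power_mult_distrib[symmetric] power_mono)
    finally show False
      by simp
  qed
  then show ?thesis
    using that by blast
qed

end

section \<open>Transverse elements\<close>

context fg_group
begin

lemma word_dist_ball_eq_image:
  assumes p: "p \<in> carrier G"
  shows "{x \<in> carrier G. dst p x \<le> r} = (\<lambda>y. p \<otimes> y) ` {g \<in> carrier G. len g \<le> r}"
proof (intro equalityI subsetI)
  fix x
  assume x: "x \<in> {x \<in> carrier G. dst p x \<le> r}"
  then have "x = p \<otimes> (inv p \<otimes> x)"
    using p by (simp add: m_assoc[symmetric])
  then show "x \<in> (\<lambda>y. p \<otimes> y) ` {g \<in> carrier G. len g \<le> r}"
    using x p by (auto simp: word_dist_def)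
next
  fix x
  assume "x \<in> (\<lambda>y. p \<otimes> y) ` {g \<in> carrier G. len g \<le> r}"
  then show "x \<in> {x \<in> carrier G. dst p x \<le> r}"
    using p word_dist_mult_left[OF p one_closed] by auto
qed

lemma finite_word_dist_ball: "p \<in> carrier G \<Longrightarrow> finite {x \<in> carrier G. dst p x \<le> r}"
  by (simp add: word_dist_ball_eq_image finite_ball)

lemma card_word_dist_ball: "p \<in> carrier G \<Longrightarrow> card {x \<in> carrier G. dst p x \<le> r} \<le> ball_card r"
  by (simp add: word_dist_ball_eq_image card_image_le finite_ball)

definition shadow :: "'a \<Rightarrow> nat \<Rightarrow> nat \<Rightarrow> 'a set" where
  "shadow z t R = {x \<in> carrier G. len x \<le> R \<and> real t \<le> gp \<one> x z}"

lemma finite_shadow: "finite (shadow z t R)"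
  unfolding shadow_def by (rule finite_subset[OF _ finite_ball[of R]]) auto

lemma exists_in_annulus_avoiding:
  assumes "finite B" and "card B + ball_card r\<^sub>0 < ball_card R"
  obtains h where "h \<in> carrier G" "r\<^sub>0 < len h" "len h \<le> R" "h \<notin> B"
proof -
  define annulus where "annulus = {x \<in> carrier G. len x \<le> R} - {x \<in> carrier G. len x \<le> r\<^sub>0}"
  have "r\<^sub>0 \<le> R"
    using assms(2) ball_card_mono[of R r\<^sub>0] by linarith
  then have card_annulus: "card annulus = ball_card R - ball_card r\<^sub>0"
    unfolding annulus_def by (intro card_Diff_subset finite_ball) auto
  have "\<not> annulus \<subseteq> B"
  proof
    assume "annulus \<subseteq> B"
    then have "card annulus \<le> card B"
      by (rule card_mono[OF assms(1)])
    then show False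
      using card_annulus assms(2) by linarith
  qed
  then obtain h where "h \<in> annulus" "h \<notin> B"
    by blast
  then show ?thesis
    using that unfolding annulus_def by auto
qed

end

context hyperbolic_fg_group
begin

lemma shadow_near_geodesic_point:
  assumes z: "z \<in> carrier G" and t: "t \<le> len z"
  obtains p where "p \<in> carrier G"
    and "\<And>x. x \<in> carrier G \<Longrightarrow> real t \<le> gp \<one> x z \<Longrightarrow> real (dst p x) \<le> real (len x) - real t + 2 * \<delta>"
proof -
  obtain p where p: "p \<in> carrier G" "len p = t" "len (inv p \<otimes> z) = len z - t"
    using exists_point_on_geodesic[OF z t] .
  have gp_pz: "gp \<one> p z = real t"
    using p z t by (simp add: gromov_product_one word_dist_eq of_nat_diff)
  have "real (dst p x) \<le> real (len x) - real t + 2 * \<delta>"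
    if x: "x \<in> carrier G" and xz: "real t \<le> gp \<one> x z" for x
  proof -
    have "real t - \<delta> \<le> gp \<one> x p"
      using four_point[OF one_closed x p(1) z] xz gp_pz by linarith
    then show ?thesis
      using x p word_dist_commute[OF x p(1)] by (simp add: gromov_product_one)
  qed
  then show ?thesis
    using that p(1) by blast
qed

lemma card_shadow_le:
  assumes z: "z \<in> carrier G" and t: "t \<le> len z" and r: "real R - real t + 2 * \<delta> \<le> real r"
  shows "card (shadow z t R) \<le> ball_card r"
proof -
  obtain p where p: "p \<in> carrier G"
    and near: "\<And>x. x \<in> carrier G \<Longrightarrow> real t \<le> gp \<one> x z \<Longrightarrow> real (dst p x) \<le> real (len x) - real t + 2 * \<delta>"
    using shadow_near_geodesic_point[OF z t] by blast
  have "shadow z t R \<subseteq> {x \<in> carrier G. dst p x \<le> r}"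
  proof (intro subsetI CollectI conjI)
    fix x
    assume "x \<in> shadow z t R"
    then have "x \<in> carrier G" "real (dst p x) \<le> real r"
      using near[of x] r by (auto simp: shadow_def)
    then show "x \<in> carrier G" "dst p x \<le> r"
      by simp_all
  qed
  then have "card (shadow z t R) \<le> card {x \<in> carrier G. dst p x \<le> r}"
    by (rule card_mono[OF finite_word_dist_ball[OF p]])
  also have "\<dots> \<le> ball_card r"
    by (rule card_word_dist_ball[OF p])
  finally show ?thesis .
qed

lemma exists_transverse_element:
  assumes g: "g \<in> carrier G" and t: "t \<le> len g" and r: "real R - real t + 2 * \<delta> \<le> real r"
    and gap: "4 * ball_card r + ball_card r\<^sub>0 < ball_card R"
  obtains h where "h \<in> carrier G" "r\<^sub>0 < len h" "len h \<le> R"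
    and "\<forall>y\<in>{h, inv h}. \<forall>z\<in>{g, inv g}. gp \<one> y z < real t"
proof -
  define bad_for where "bad_for z = shadow z t R \<union> (\<lambda>x. inv x) ` shadow z t R" for z
  define bad where "bad = bad_for g \<union> bad_for (inv g)"
  have small: "card (bad_for z) \<le> 2 * ball_card r" if "z \<in> {g, inv g}" for z
  proof -
    have "card (shadow z t R) \<le> ball_card r"
      using that g t card_shadow_le[OF _ _ r] by auto
    moreover have "card ((\<lambda>x. inv x) ` shadow z t R) \<le> card (shadow z t R)"
      by (rule card_image_le[OF finite_shadow])
    ultimately show ?thesis
      unfolding bad_for_def using card_Un_le[of "shadow z t R" "(\<lambda>x. inv x) ` shadow z t R"]
      by linarith
  qed
  have card_bad: "card bad \<le> 4 * ball_card r"
    unfolding bad_def using card_Un_le[of "bad_for g" "bad_for (inv g)"] small[of g] small[of "inv g"]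
    by simp
  have "finite bad"
    unfolding bad_def bad_for_def by (simp add: finite_shadow)
  moreover have "card bad + ball_card r\<^sub>0 < ball_card R"
    using gap card_bad by linarith
  ultimately obtain h where h: "h \<in> carrier G" "r\<^sub>0 < len h" "len h \<le> R" and "h \<notin> bad"
    by (rule exists_in_annulus_avoiding)
  then have "h \<notin> shadow z t R" "inv h \<notin> shadow z t R" if "z \<in> {g, inv g}" for z
    using that image_eqI[of h "\<lambda>x. inv x" "inv h"] unfolding bad_def bad_for_def by auto
  then show ?thesis
    using that[OF h] h g by (auto simp: shadow_def not_le)
qed

lemma transversality_scales:
  assumes "free_pair G a b"
  obtains t r\<^sub>0 R r where "2 * real t + 2 * \<delta> \<le> real r\<^sub>0" "real R - real t + 2 * \<delta> \<le> real r"
    and "4 * ball_card r + ball_card r\<^sub>0 < ball_card R"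
proof -
  obtain s where s: "\<And>R0. \<exists>R\<ge>R0. 5 * ball_card (R - s) < ball_card R"
    using ball_card_frequent_gap[OF assms] by blast
  define D where "D = nat \<lceil>2 * \<delta>\<rceil>"
  define t where "t = s + D"
  obtain R where R: "3 * t \<le> R" "5 * ball_card (R - s) < ball_card R"
    using s by blast
  have D: "2 * \<delta> \<le> real D"
    unfolding D_def by linarith
  then have "real R - real t + 2 * \<delta> \<le> real (R - s)"
    using R(1) unfolding t_def by (simp add: of_nat_diff)
  moreover have "ball_card (2 * t + D) \<le> ball_card (R - s)"
    using R(1) unfolding t_def by (intro ball_card_mono) simp
  then have "4 * ball_card (R - s) + ball_card (2 * t + D) < ball_card R"
    using R(2) by linarith
  moreover have "2 * real t + 2 * \<delta> \<le> real (2 * t + D)"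
    using D by simp
  ultimately show ?thesis
    using that by blast
qed

lemma commutator_witness_in_ball:
  assumes "free_pair G a b"
  obtains R C where "\<And>g. g \<in> carrier G \<Longrightarrow> \<exists>h\<in>carrier G. len h \<le> R \<and>
    2 * real (len g) \<le> real (transl_length G S (commutator G g h)) + C"
proof -
  obtain t r\<^sub>0 R r where r\<^sub>0: "2 * real t + 2 * \<delta> \<le> real r\<^sub>0" and r: "real R - real t + 2 * \<delta> \<le> real r"
    and gap: "4 * ball_card r + ball_card r\<^sub>0 < ball_card R"
    by (rule transversality_scales[OF assms])
  have "\<exists>h\<in>carrier G. len h \<le> R \<and>
      2 * real (len g) \<le> real (transl_length G S (commutator G g h)) + (8 * (real t + \<delta>) + 1)"
    if g: "g \<in> carrier G" for g
  proof (cases "real (len g) \<le> 2 * real t + 2 * \<delta>")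
    case True
    then show ?thesis
      using delta_nonneg by (intro bexI[of _ \<one>]) simp_all
  next
    case False
    then have "t \<le> len g"
      using delta_nonneg by linarith
    then obtain h where h: "h \<in> carrier G" "r\<^sub>0 < len h" "len h \<le> R"
      and transverse: "\<forall>y\<in>{h, inv h}. \<forall>z\<in>{g, inv g}. gp \<one> y z < real t"
      using exists_transverse_element[OF g _ r gap] by blast
    have "2 * real (len g) + 2 * real (len h) - 8 * (real t + \<delta>) - 1
        \<le> real (transl_length G S (commutator G g h))"
      using False h(2) r\<^sub>0 transverse
      by (intro commutator_transl_length_ge[OF g h(1)]) (auto simp: less_imp_le)
    then show ?thesis
      using h by auto
  qed
  then show ?thesis
    using that by blast
qed

end

context fg_group
begin

lemma word_length_bounded_if_commutators_bounded:
  fixes C :: real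
  assumes witness: "\<And>g. g \<in> carrier G \<Longrightarrow> \<exists>h\<in>carrier G. len h \<le> R \<and>
      2 * real (len g) \<le> real (transl_length G S (commutator G g h)) + C"
    and bounded: "\<forall>h\<in>carrier G. \<exists>B. \<forall>n. transl_length G S (commutator G (\<gamma> n) h) \<le> B"
    and \<gamma>: "\<And>n. \<gamma> n \<in> carrier G"
  shows "\<exists>B. \<forall>n. len (\<gamma> n) \<le> B"
proof -
  obtain B where B: "\<And>h n. h \<in> carrier G \<Longrightarrow> transl_length G S (commutator G (\<gamma> n) h) \<le> B h"
    using bchoice[OF bounded] by blast
  define M where "M = Max (B ` {h \<in> carrier G. len h \<le> R})"
  have "real (len (\<gamma> n)) \<le> (real M + C) / 2" for n
  proof -
    obtain h where h: "h \<in> carrier G" "len h \<le> R"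
      and escape: "2 * real (len (\<gamma> n)) \<le> real (transl_length G S (commutator G (\<gamma> n) h)) + C"
      using witness[OF \<gamma>] by blast
    have "B h \<le> M"
      unfolding M_def using h by (intro Max_ge finite_imageI finite_ball) auto
    then have "real (transl_length G S (commutator G (\<gamma> n) h)) \<le> real M"
      using B[OF h(1)] le_trans of_nat_le_iff by blast
    then have "2 * real (len (\<gamma> n)) \<le> real M + C"
      using escape by linarith
    then show ?thesis
      by simp
  qed
  then have "len (\<gamma> n) \<le> nat \<lceil>(real M + C) / 2\<rceil>" for n
    by (meson le_nat_iff of_nat_le_iff order_trans real_nat_ceiling_ge)
  then show ?thesis
    by blast
qed

lemma unbounded_word_length_if_inj:
  fixes \<gamma> :: "nat \<Rightarrow> 'a"
  assumes "inj \<gamma>" and "\<And>n. \<gamma> n \<in> carrier G"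
  shows "\<not> (\<exists>B. \<forall>n. len (\<gamma> n) \<le> B)"
proof
  assume "\<exists>B. \<forall>n. len (\<gamma> n) \<le> B"
  then obtain B where "range \<gamma> \<subseteq> {g \<in> carrier G. len g \<le> B}"
    using assms(2) by blast
  then have "finite (range \<gamma>)"
    using finite_ball finite_subset by blast
  then show False
    using finite_imageD[of \<gamma> UNIV] assms(1) infinite_UNIV_nat by blast
qed

end

theorem mainTheorem17:
  fixes G :: "('a, 'b) monoid_scheme" and S :: "'a set" and \<gamma> :: "nat \<Rightarrow> 'a"
  assumes "group G"
    and "finite S" and "S \<subseteq> carrier G" and "generate G S = carrier G"
    and "hyperbolic_group G S"
    and "non_elementary G"
    and "\<And>n. \<gamma> n \<in> carrier G" and "inj \<gamma>"
  shows "\<exists>h\<in>carrier G. \<not> (\<exists>B. \<forall>n. transl_length G S (commutator G (\<gamma> n) h) \<le> B)"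
proof -
  have "fg_group G S"
    using assms(1-4) by (simp add: fg_group_def fg_group_axioms_def)
  then obtain \<delta> where "hyperbolic_fg_group G S \<delta>"
    using assms(5) fg_group.exists_hyperbolic_fg_group by blast
  then interpret hyperbolic_fg_group G S \<delta> .
  obtain a b where "free_pair G a b"
    using assms(6) unfolding non_elementary_def by blast
  then obtain R C where witness: "\<And>g. g \<in> carrier G \<Longrightarrow> \<exists>h\<in>carrier G. len h \<le> R \<and>
      2 * real (len g) \<le> real (transl_length G S (commutator G g h)) + C"
    using commutator_witness_in_ball by blast
  show ?thesis
  proof (rule ccontr)
    assume "\<not> ?thesis"
    then have "\<exists>B. \<forall>n. len (\<gamma> n) \<le> B"
      using witness assms(7) by (intro word_length_bounded_if_commutators_bounded) auto
    then show False
      using unbounded_word_length_if_inj[OF assms(8,7)] by blast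
  qed
qed

end
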